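(* Let $d\in C^1(\mathbb{R})$ with $d(0)=0$, $d'(m)>d_0$ and $|d'(m)|\le d_1+d_2|m|^p$ for all $m\in\mathbb{R}$, for constants $d_0>0$, $d_1,d_2,p\ge0$. Let $\bar f,\bar g\in L^2(0,1)$, $\bar h=(\bar h(0),\bar h(1))\in\mathbb{R}^2$, $T>0$, and let $(p,m)$ be a smooth solution on $(0,1)\times[0,T]$ of $$\partial_t p+\partial_x m=\bar f,\qquad \partial_t m+\partial_x p+d(m)=\bar g\quad\text{in }(0,1)\times[0,T],\qquad p(x,t)=\bar h(x)\ \text{for }x\in\{0,1\},\ t\in[0,T].$$ Then for all $t\in[0,T]$, $$\|\partial_t p(t)\|_{L^2}+\|\partial_t m(t)\|_{L^2}+\|m(t)\|_{H^1}\le c,$$ where the constant $c$ depends only on $\|\bar f\|_{L^2},\|\bar g\|_{L^2},|\bar h|_1,\|p(0)\|_{H^1},\|m(0)\|_{H^1}$, and not on $t$ or $T$.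
   Context: $p(t)$, $m(t)$ denote the functions $x\mapsto p(x,t)$, $x\mapsto m(x,t)$. $|\bar h|_1=|\bar h(0)|+|\bar h(1)|$. The conditions on $d$ are the paper's standing assumption on the damping function in this system. *)

theory Defs
  imports "HOL-Analysis.Analysis"
begin

text \<open>A function of two real variables (x,t) is smooth (C-infinity) on the set U if it
  belongs to a family of functions closed under taking both partial derivatives, every
  member of which is (Frechet) differentiable at each point of U.\<close>
definition smooth_on2 :: "(real \<times> real) set \<Rightarrow> (real \<Rightarrow> real \<Rightarrow> real) \<Rightarrow> bool" where
  "smooth_on2 U u \<longleftrightarrow>
     (\<exists>F. u \<in> F \<and>
        (\<forall>v\<in>F. \<exists>vx\<in>F. \<exists>vt\<in>F. \<forall>x t. (x, t) \<in> U \<longrightarrow>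
           ((\<lambda>z. v (fst z) (snd z)) has_derivative
              (\<lambda>h. vx x t * fst h + vt x t * snd h)) (at (x, t))))"

definition L2norm :: "(real \<Rightarrow> real) \<Rightarrow> real" where
  "L2norm u = sqrt (LINT x:{0<..<1}|lborel. (u x)\<^sup>2)"

definition H1norm :: "(real \<Rightarrow> real) \<Rightarrow> real" where
  "H1norm u = sqrt ((L2norm u)\<^sup>2 + (L2norm (\<lambda>x. deriv u x))\<^sup>2)"

definition in_L2 :: "(real \<Rightarrow> real) \<Rightarrow> bool" where
  "in_L2 u \<longleftrightarrow> u \<in> borel_measurable lborel \<and> set_integrable lborel {0<..<1} (\<lambda>x. (u x)\<^sup>2)"

end

theory Submission
  imports Defs
begin

text \<open>Differentiating the equations in \<open>t\<close> shows that \<open>(u, v) = (p\<^sub>t, m\<^sub>t)\<close> solves the linear system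
  \<open>u\<^sub>t + v\<^sub>x = 0\<close>, \<open>v\<^sub>t + u\<^sub>x + d'(m) v = 0\<close> with \<open>u = 0\<close> at \<open>x = 0\<close> and \<open>x = 1\<close>. As \<open>d' > 0\<close>,
  its energy \<open>\<parallel>u\<parallel>\<^sup>2 + \<parallel>v\<parallel>\<^sup>2\<close> does not increase, and at \<open>t = 0\<close> the equations express \<open>p\<^sub>t\<close> and
  \<open>m\<^sub>t\<close> through \<open>f\<close>, \<open>g\<close>, \<open>p\<^sub>x\<close>, \<open>m\<^sub>x\<close> and \<open>d(m)\<close>, where \<open>m(\<cdot>,0)\<close> is bounded pointwise by its
  \<open>H\<^sup>1\<close> norm. The first equation then bounds \<open>\<parallel>m\<^sub>x(t)\<parallel>\<close> by \<open>\<parallel>f\<parallel>\<close> and \<open>\<parallel>p\<^sub>t(t)\<parallel>\<close>.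
  Integrating the second equation over \<open>(0,1)\<close> bounds the mean of \<open>d(m(\<cdot>,t))\<close> in terms of \<open>g\<close>,
  \<open>m\<^sub>t(t)\<close> and \<open>\<bar>h(0)\<bar> + \<bar>h(1)\<bar>\<close>; hence \<open>d(m(\<cdot>,t))\<close> lies below this bound at one point and above
  its negative at another. As \<open>d(0) = 0\<close> and \<open>d' > d\<^sub>0 > 0\<close>, \<open>m(\<cdot>,t)\<close> is bounded above at the first
  point and below at the second by this bound divided by \<open>d\<^sub>0\<close>, and \<open>\<parallel>m\<^sub>x(t)\<parallel>\<close> controls the oscillation of \<open>m(\<cdot>,t)\<close>.\<close>

section \<open>Partial derivatives of functions of two variables\<close>

definition has_partials ::
    "(real \<times> real) set \<Rightarrow> (real \<Rightarrow> real \<Rightarrow> real) \<Rightarrow> (real \<Rightarrow> real \<Rightarrow> real) \<Rightarrow> (real \<Rightarrow> real \<Rightarrow> real) \<Rightarrow> bool"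
  where "has_partials S v vx vt \<longleftrightarrow> (\<forall>x t. (x, t) \<in> S \<longrightarrow>
     ((\<lambda>z. v (fst z) (snd z)) has_derivative (\<lambda>h. vx x t * fst h + vt x t * snd h)) (at (x, t)))"

lemma has_partials_subset: "has_partials S v vx vt \<Longrightarrow> S' \<subseteq> S \<Longrightarrow> has_partials S' v vx vt"
  unfolding has_partials_def by blast

lemma has_partials_cong:
  assumes "has_partials S v vx vt" "\<And>x t. (x, t) \<in> S \<Longrightarrow> vx x t = wx x t"
  shows "has_partials S v wx vt"
  using assms unfolding has_partials_def by force

lemma has_partials_x:
  assumes "has_partials S v vx vt" "(x, t) \<in> S"
  shows "((\<lambda>y. v y t) has_real_derivative vx x t) (at x within A)"
proof -
  have v: "((\<lambda>z. v (fst z) (snd z)) has_derivative (\<lambda>h. vx x t * fst h + vt x t * snd h)) (at (x, t))"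
    using assms unfolding has_partials_def by blast
  have "((\<lambda>y. (y, t)) has_derivative (\<lambda>h. (h, 0))) (at x within A)"
    by (auto intro!: derivative_eq_intros)
  from has_derivative_compose[OF this v] show ?thesis
    by (simp add: has_field_derivative_def mult_commute_abs)
qed

lemma has_partials_t:
  assumes "has_partials S v vx vt" "(x, t) \<in> S"
  shows "((\<lambda>s. v x s) has_real_derivative vt x t) (at t within A)"
proof -
  have v: "((\<lambda>z. v (fst z) (snd z)) has_derivative (\<lambda>h. vx x t * fst h + vt x t * snd h)) (at (x, t))"
    using assms unfolding has_partials_def by blast
  have "((\<lambda>s. (x, s)) has_derivative (\<lambda>h. (0, h))) (at t within A)"
    by (auto intro!: derivative_eq_intros)
  from has_derivative_compose[OF this v] show ?thesis
    by (simp add: has_field_derivative_def mult_commute_abs)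
qed

lemma has_partials_deriv:
  assumes "has_partials S v vx vt" "(x, t) \<in> S"
  shows "deriv (\<lambda>y. v y t) x = vx x t" and "deriv (\<lambda>s. v x s) t = vt x t"
  using has_partials_x[OF assms] has_partials_t[OF assms] by (auto intro: DERIV_imp_deriv)

lemma has_partials_continuous_on:
  assumes "has_partials S v vx vt"
  shows "continuous_on S (\<lambda>z. v (fst z) (snd z))"
proof (rule continuous_at_imp_continuous_on, clarify)
  fix x t assume "(x, t) \<in> S"
  then show "isCont (\<lambda>z. v (fst z) (snd z)) (x, t)"
    using assms unfolding has_partials_def by (blast intro: has_derivative_continuous)
qed

lemma continuous_on_slice:
  assumes "continuous_on S (\<lambda>z. w (fst z) (snd z))" "A \<times> {t} \<subseteq> S"
  shows "continuous_on A (\<lambda>x. w x t)"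
  using continuous_on_compose2[OF assms(1) continuous_on_Pair[OF continuous_on_id continuous_on_const]]
    assms(2) by auto

lemma continuous_on_swap_args:
  assumes "continuous_on S (\<lambda>z. w (fst z) (snd z))" "B \<times> A \<subseteq> S"
  shows "continuous_on (A \<times> B) (\<lambda>(t, x). w x t)"
proof -
  have "continuous_on (A \<times> B) (\<lambda>z. (snd z, fst z))" by (intro continuous_intros)
  moreover have "(\<lambda>z. (snd z, fst z)) ` (A \<times> B) \<subseteq> S" using assms(2) by auto
  ultimately show ?thesis
    using continuous_on_compose2[OF assms(1)] by (fastforce simp: case_prod_beta')
qed

lemma partial_t_diff_eq_integral:
  assumes v: "has_partials S v vx vt" and vx: "has_partials S vx vxx vxt"
    and vxt: "continuous_on S (\<lambda>z. vxt (fst z) (snd z))"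
    and box: "{a..b} \<times> J \<subseteq> S" and J: "open J" "convex J" "t \<in> J" and y: "y \<in> {a..b}"
  shows "vt y t - vt a t = integral {a..y} (\<lambda>r. vxt r t)"
proof -
  have sub: "{a..y} \<times> J \<subseteq> S" using box y by auto
  have ftc: "v y s - v a s = integral {a..y} (\<lambda>r. vx r s)" if "s \<in> J" for s
  proof -
    have "((\<lambda>r. vx r s) has_integral (v y s - v a s)) {a..y}"
      using y sub that
      by (intro fundamental_theorem_of_calculus)
         (auto simp: has_real_derivative_iff_has_vector_derivative[symmetric] intro!: has_partials_x[OF v])
    then show ?thesis by (simp add: integral_unique)
  qed
  have "((\<lambda>s. integral (cbox a y) (\<lambda>r. vx r s)) has_real_derivative
      integral (cbox a y) (\<lambda>r. vxt r t)) (at t within J)"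
  proof (rule leibniz_rule_field_derivative[where fx="\<lambda>s r. vxt r s"])
    show "((\<lambda>s. vx r s) has_real_derivative vxt r s) (at s within J)"
      if "s \<in> J" "r \<in> cbox a y" for s r
      using has_partials_t[OF vx, of r s J] subsetD[OF sub, of "(r, s)"] that by simp
    show "(\<lambda>r. vx r s) integrable_on cbox a y" if "s \<in> J" for s
    proof -
      have "{a..y} \<times> {s} \<subseteq> S" using sub that by auto
      from continuous_on_slice[OF has_partials_continuous_on[OF vx] this] show ?thesis
        by (simp add: integrable_continuous_interval)
    qed
    show "continuous_on (J \<times> cbox a y) (\<lambda>(s, r). vxt r s)"
      using continuous_on_swap_args[OF vxt] sub by simp
  qed (use J in auto)
  then have "((\<lambda>s. integral {a..y} (\<lambda>r. vx r s)) has_real_derivative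
      integral {a..y} (\<lambda>r. vxt r t)) (at t)"
    using at_within_open[OF J(3,1)] by simp
  then have "((\<lambda>s. v y s - v a s) has_real_derivative integral {a..y} (\<lambda>r. vxt r t)) (at t)"
    by (rule has_field_derivative_transform_within_open[OF _ J(1,3)]) (simp add: ftc)
  moreover have "((\<lambda>s. v y s - v a s) has_real_derivative vt y t - vt a t) (at t)"
    using box y J(3) by (intro derivative_intros has_partials_t[OF v]) auto
  ultimately show ?thesis by (rule DERIV_unique[rotated])
qed

lemma mixed_partials_eq:
  assumes S: "open S" and v: "has_partials S v vx vt" and vx: "has_partials S vx vxx vxt"
    and vt: "has_partials S vt vtx vtt"
    and vxt: "continuous_on S (\<lambda>z. vxt (fst z) (snd z))" and xt: "(x, t) \<in> S"
  shows "vxt x t = vtx x t"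
proof -
  obtain a b where box: "cbox a b \<subseteq> S" "(x, t) \<in> box a b"
    by (meson open_contains_cbox[OF S xt])
  obtain a1 a2 b1 b2 where ab: "a = (a1, a2)" "b = (b1, b2)"
    by (metis surj_pair)
  have x: "a1 < x" "x < b1" and t: "a2 < t" "t < b2"
    using box(2) by (auto simp: ab mem_box Basis_prod_def)
  have sub: "{a1..b1} \<times> {a2<..<b2} \<subseteq> S"
    using box(1) by (auto simp: ab cbox_Pair_eq)
  have "{a1..b1} \<times> {t} \<subseteq> S" using sub t by auto
  then have "continuous_on {a1..b1} (\<lambda>r. vxt r t)" by (rule continuous_on_slice[OF vxt])
  from integral_has_vector_derivative[OF this, of x] x
  have "((\<lambda>y. integral {a1..y} (\<lambda>r. vxt r t)) has_real_derivative vxt x t) (at x)"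
    by (simp add: has_real_derivative_iff_has_vector_derivative at_within_Icc_at)
  then have "((\<lambda>y. vt y t - vt a1 t) has_real_derivative vxt x t) (at x)"
  proof (rule has_field_derivative_transform_within_open[OF _ open_greaterThanLessThan])
    show "x \<in> {a1<..<b1}" using x by simp
    show "integral {a1..y} (\<lambda>r. vxt r t) = vt y t - vt a1 t" if "y \<in> {a1<..<b1}" for y
      using partial_t_diff_eq_integral[OF v vx vxt sub] t that by simp
  qed
  moreover have "((\<lambda>y. vt y t - vt a1 t) has_real_derivative vtx x t) (at x)"
    using has_partials_x[OF vt xt] by (auto intro!: derivative_eq_intros)
  ultimately show ?thesis by (rule DERIV_unique)
qed

text \<open>Sharing \<open>vxt\<close> between \<open>vx\<close> and \<open>vt\<close> is justified for smooth functions by \<open>mixed_partials_eq\<close>.\<close>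
definition has_second_partials ::
    "(real \<times> real) set \<Rightarrow> (real \<Rightarrow> real \<Rightarrow> real) \<Rightarrow> (real \<Rightarrow> real \<Rightarrow> real) \<Rightarrow> (real \<Rightarrow> real \<Rightarrow> real)
      \<Rightarrow> (real \<Rightarrow> real \<Rightarrow> real) \<Rightarrow> (real \<Rightarrow> real \<Rightarrow> real) \<Rightarrow> bool"
  where "has_second_partials S v vx vt vxt vtt \<longleftrightarrow>
    has_partials S v vx vt \<and> (\<exists>vxx. has_partials S vx vxx vxt) \<and> has_partials S vt vxt vtt
    \<and> continuous_on S (\<lambda>z. vtt (fst z) (snd z))"

lemma has_second_partials_subset:
  "has_second_partials S v vx vt vxt vtt \<Longrightarrow> S' \<subseteq> S \<Longrightarrow> has_second_partials S' v vx vt vxt vtt"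
  unfolding has_second_partials_def by (meson continuous_on_subset has_partials_subset)

lemma has_second_partials_xt:
  assumes "has_second_partials S v vx vt vxt vtt" "(x, t) \<in> S"
  shows "((\<lambda>s. vx x s) has_real_derivative vxt x t) (at t within A)"
  using assms has_partials_t unfolding has_second_partials_def by blast

lemma has_second_partials_continuous_on:
  assumes "has_second_partials S v vx vt vxt vtt"
  shows "continuous_on S (\<lambda>z. v (fst z) (snd z))" "continuous_on S (\<lambda>z. vx (fst z) (snd z))"
    "continuous_on S (\<lambda>z. vt (fst z) (snd z))" "continuous_on S (\<lambda>z. vtt (fst z) (snd z))"
  using assms has_partials_continuous_on unfolding has_second_partials_def by blast+

lemma smooth_on2_has_second_partials:
  assumes U: "open U" and u: "smooth_on2 U u"
  obtains ux ut uxt utt where "has_second_partials U u ux ut uxt utt"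
proof -
  obtain F where "u \<in> F" and F: "\<forall>v\<in>F. \<exists>vx\<in>F. \<exists>vt\<in>F. has_partials U v vx vt"
    using u unfolding smooth_on2_def has_partials_def by blast
  then obtain DX DT where D: "\<And>v. v \<in> F \<Longrightarrow> DX v \<in> F \<and> DT v \<in> F \<and> has_partials U v (DX v) (DT v)"
    by metis
  have cont: "continuous_on U (\<lambda>z. w (fst z) (snd z))" if "w \<in> F" for w
    using D[OF that] by (blast intro: has_partials_continuous_on)
  let ?ux = "DX u" and ?ut = "DT u"
  have "DT ?ux x t = DX ?ut x t" if "(x, t) \<in> U" for x t
    using \<open>u \<in> F\<close> D cont that by (blast intro: mixed_partials_eq[OF U])
  then have "has_partials U ?ut (DT ?ux) (DT ?ut)"
    using D \<open>u \<in> F\<close> by (metis has_partials_cong)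
  then have "has_second_partials U u ?ux ?ut (DT ?ux) (DT ?ut)"
    using D cont \<open>u \<in> F\<close> unfolding has_second_partials_def by blast
  then show thesis by (rule that)
qed

section \<open>Integrals over \<open>(0,1)\<close>\<close>

abbreviation int01 :: "(real \<Rightarrow> real) \<Rightarrow> real" where
  "int01 u \<equiv> LINT x:{0<..<1}|lborel. u x"

lemma continuous_on_set_integrable_01:
  "continuous_on {0..1} u \<Longrightarrow> set_integrable lborel {0<..<1} (u :: real \<Rightarrow> real)"
  by (rule set_integrable_subset[OF borel_integrable_atLeastAtMost']) auto

lemma int01_eq_integral:
  assumes "continuous_on {0..1} u"
  shows "int01 u = integral {0..1} u"
  using set_borel_integral_eq_integral(2)[OF continuous_on_set_integrable_01[OF assms]]
  by (simp add: integral_open_interval_real)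

lemma set_integrable_01_const [simp]: "set_integrable lborel {0<..<1::real} (\<lambda>_. c :: real)"
  using continuous_on_set_integrable_01[OF continuous_on_const] .

lemma int01_mono:
  fixes u v :: "real \<Rightarrow> real"
  assumes "set_integrable lborel {0<..<1} v" "AE x in lborel. x \<in> {0<..<1} \<longrightarrow> u x \<le> v x"
    "\<And>x. x \<in> {0<..<1} \<Longrightarrow> 0 \<le> v x"
  shows "int01 u \<le> int01 v"
  unfolding set_lebesgue_integral_def
proof (rule integral_mono_AE')
  show "integrable lborel (\<lambda>x. indicat_real {0<..<1} x *\<^sub>R v x)"
    using assms(1) unfolding set_integrable_def .
  show "AE x in lborel. indicat_real {0<..<1} x *\<^sub>R u x \<le> indicat_real {0<..<1} x *\<^sub>R v x"
    using assms(2) by eventually_elim (auto simp: indicator_def)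
  show "AE x in lborel. 0 \<le> indicat_real {0<..<1} x *\<^sub>R v x"
    using assms(3) by (auto simp: indicator_def)
qed

lemma int01_nonneg: "(\<And>x. x \<in> {0<..<1} \<Longrightarrow> 0 \<le> u x) \<Longrightarrow> 0 \<le> int01 u"
  unfolding set_lebesgue_integral_def by (rule integral_nonneg_AE) (auto simp: indicator_def)

lemma int01_const [simp]: "int01 (\<lambda>_. c) = (c :: real)"
  by (subst set_integral_const) auto

lemma L2norm_sq: "(L2norm u)\<^sup>2 = int01 (\<lambda>x. (u x)\<^sup>2)"
  unfolding L2norm_def by (simp add: int01_nonneg)

lemma L2norm_cong:
  assumes "\<And>x. x \<in> {0<..<1} \<Longrightarrow> u x = v x"
  shows "L2norm u = L2norm v"
proof -
  have "int01 (\<lambda>x. (u x)\<^sup>2) = int01 (\<lambda>x. (v x)\<^sup>2)"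
    by (rule set_lebesgue_integral_cong) (use assms in auto)
  then show ?thesis unfolding L2norm_def by simp
qed

lemma H1norm_eq:
  assumes "\<And>x. x \<in> {0<..<1} \<Longrightarrow> (u has_real_derivative u' x) (at x)"
  shows "H1norm u = sqrt ((L2norm u)\<^sup>2 + (L2norm u')\<^sup>2)"
proof -
  have "L2norm (deriv u) = L2norm u'"
    by (rule L2norm_cong) (use assms in \<open>blast intro: DERIV_imp_deriv\<close>)
  then show ?thesis unfolding H1norm_def by simp
qed

lemma abs_le_half_one_plus_sq: "\<bar>y\<bar> \<le> (1 + y\<^sup>2) / 2" for y :: real
proof -
  have "0 \<le> (\<bar>y\<bar> - 1)\<^sup>2" by simp
  then show ?thesis unfolding power2_diff power2_abs by simp
qed

lemma in_L2_set_integrable: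
  assumes "in_L2 u"
  shows "set_integrable lborel {0<..<1} u"
proof (rule set_integrable_bound)
  have sq: "set_integrable lborel {0<..<1} (\<lambda>x. (u x)\<^sup>2)" and u: "u \<in> borel_measurable lborel"
    using assms unfolding in_L2_def by auto
  show "set_integrable lborel {0<..<1} (\<lambda>x. 1 + (u x)\<^sup>2)"
    by (rule set_integral_add(1)[OF set_integrable_01_const sq])
  show "set_borel_measurable lborel {0<..<1} u"
    unfolding set_borel_measurable_def
    by (intro borel_measurable_scaleR borel_measurable_indicator u) auto
  show "AE x in lborel. x \<in> {0<..<1} \<longrightarrow> norm (u x) \<le> norm (1 + (u x)\<^sup>2)"
  proof (intro AE_I2 impI)
    fix x
    have "0 \<le> 1 + (u x)\<^sup>2" by simp
    then show "norm (u x) \<le> norm (1 + (u x)\<^sup>2)"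
      using abs_le_half_one_plus_sq[of "u x"] by simp
  qed
qed

lemma int01_abs_le_L2norm:
  assumes "set_integrable lborel {0<..<1} (\<lambda>x. (u x)\<^sup>2)"
  shows "int01 (\<lambda>x. \<bar>u x\<bar>) \<le> (1 + (L2norm u)\<^sup>2) / 2"
proof -
  have int: "set_integrable lborel {0<..<1} (\<lambda>x. (1 + (u x)\<^sup>2) / 2)"
    using assms by (intro set_integrable_divide set_integral_add) auto
  have "int01 (\<lambda>x. \<bar>u x\<bar>) \<le> int01 (\<lambda>x. (1 + (u x)\<^sup>2) / 2)"
    by (rule int01_mono[OF int]) (intro AE_I2 impI abs_le_half_one_plus_sq, simp)
  also have "\<dots> = (1 + (L2norm u)\<^sup>2) / 2"
    using assms by (simp add: L2norm_sq)
  finally show ?thesis .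
qed

lemma int01_cong_AE:
  fixes u v :: "real \<Rightarrow> real"
  assumes "set_integrable lborel {0<..<1} u" "set_integrable lborel {0<..<1} v"
    and "AE x in lborel. x \<in> {0<..<1} \<longrightarrow> u x = v x"
  shows "int01 u = int01 v"
  using assms by (intro antisym set_integral_mono_AE) (auto elim: AE_mp)

lemma L2norm_sq_add_eq_integral:
  assumes "continuous_on {0..1} u" "continuous_on {0..1} v"
  shows "(L2norm u)\<^sup>2 + (L2norm v)\<^sup>2 = integral {0..1} (\<lambda>x. (u x)\<^sup>2 + (v x)\<^sup>2)"
  using assms
  by (simp add: L2norm_sq int01_eq_integral[symmetric] continuous_intros continuous_on_set_integrable_01)

lemma L2norm_sq_le_AE_diff:
  assumes a: "set_integrable lborel {0<..<1} (\<lambda>x. (a x)\<^sup>2)"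
    and b: "set_integrable lborel {0<..<1} (\<lambda>x. (b x)\<^sup>2)"
    and w: "AE x in lborel. x \<in> {0<..<1} \<longrightarrow> w x = a x - b x"
  shows "(L2norm w)\<^sup>2 \<le> 2 * (L2norm a)\<^sup>2 + 2 * (L2norm b)\<^sup>2"
proof -
  have "int01 (\<lambda>x. (w x)\<^sup>2) \<le> int01 (\<lambda>x. 2 * (a x)\<^sup>2 + 2 * (b x)\<^sup>2)"
  proof (rule int01_mono)
    show "AE x in lborel. x \<in> {0<..<1} \<longrightarrow> (w x)\<^sup>2 \<le> 2 * (a x)\<^sup>2 + 2 * (b x)\<^sup>2"
      using w
    proof eventually_elim
      case (elim x)
      have "0 \<le> (a x + b x)\<^sup>2" by simp
      then have "(a x - b x)\<^sup>2 \<le> 2 * (a x)\<^sup>2 + 2 * (b x)\<^sup>2"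
        by (simp add: power2_eq_square algebra_simps)
      with elim show ?case by auto
    qed
  qed (use a b in auto)
  then show ?thesis using a b by (simp add: L2norm_sq)
qed

lemma L2norm_sq_le_AE_diff3:
  assumes a: "set_integrable lborel {0<..<1} (\<lambda>x. (a x)\<^sup>2)"
    and b: "set_integrable lborel {0<..<1} (\<lambda>x. (b x)\<^sup>2)"
    and c: "\<And>x. x \<in> {0<..<1} \<Longrightarrow> \<bar>c x\<bar> \<le> D"
    and w: "AE x in lborel. x \<in> {0<..<1} \<longrightarrow> w x = a x - b x - c x"
  shows "(L2norm w)\<^sup>2 \<le> 3 * (L2norm a)\<^sup>2 + 3 * (L2norm b)\<^sup>2 + 3 * D\<^sup>2"
proof -
  have "int01 (\<lambda>x. (w x)\<^sup>2) \<le> int01 (\<lambda>x. 3 * (a x)\<^sup>2 + 3 * (b x)\<^sup>2 + 3 * D\<^sup>2)"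
  proof (rule int01_mono)
    show "AE x in lborel. x \<in> {0<..<1} \<longrightarrow> (w x)\<^sup>2 \<le> 3 * (a x)\<^sup>2 + 3 * (b x)\<^sup>2 + 3 * D\<^sup>2"
      using w
    proof eventually_elim
      case (elim x)
      show ?case
      proof
        assume x: "x \<in> {0<..<1}"
        have "(c x)\<^sup>2 \<le> D\<^sup>2" using power_mono[OF c[OF x] abs_ge_zero, of 2] by simp
        moreover have "(a x - b x - c x)\<^sup>2 \<le> 3 * (a x)\<^sup>2 + 3 * (b x)\<^sup>2 + 3 * (c x)\<^sup>2"
        proof -
          have "0 \<le> (a x + b x)\<^sup>2 + (a x + c x)\<^sup>2 + (b x - c x)\<^sup>2" by simp
          then show ?thesis by (simp add: power2_eq_square algebra_simps)
        qed
        ultimately show "(w x)\<^sup>2 \<le> 3 * (a x)\<^sup>2 + 3 * (b x)\<^sup>2 + 3 * D\<^sup>2"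
          using elim x by simp
      qed
    qed
  qed (use a b in auto)
  then show ?thesis using a b by (simp add: L2norm_sq)
qed

lemma L2norm_sq_le_of_abs_le:
  assumes "\<And>x. x \<in> {0<..<1} \<Longrightarrow> \<bar>u x\<bar> \<le> S"
  shows "(L2norm u)\<^sup>2 \<le> S\<^sup>2"
proof -
  have "int01 (\<lambda>x. (u x)\<^sup>2) \<le> int01 (\<lambda>_. S\<^sup>2)"
  proof (rule int01_mono)
    show "AE x in lborel. x \<in> {0<..<1} \<longrightarrow> (u x)\<^sup>2 \<le> S\<^sup>2"
    proof (intro AE_I2 impI)
      fix x :: real assume "x \<in> {0<..<1}"
      then show "(u x)\<^sup>2 \<le> S\<^sup>2" using assms power_mono[of "\<bar>u x\<bar>" S 2] by simp
    qed
  qed simp_all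
  then show ?thesis by (simp add: L2norm_sq)
qed

lemma continuous_AE_eq_imp_eq:
  fixes u v :: "real \<Rightarrow> real"
  assumes u: "continuous_on {0..1} u" and v: "continuous_on {0..1} v"
    and ae: "AE x in lborel. x \<in> {0<..<1} \<longrightarrow> u x = v x" and x0: "x0 \<in> {0<..<1}"
  shows "u x0 = v x0"
proof (rule ccontr)
  assume "u x0 \<noteq> v x0"
  moreover have "continuous_on {0<..<1} (\<lambda>x. u x - v x)"
    by (rule continuous_on_subset[OF continuous_on_diff[OF u v]]) auto
  then have "isCont (\<lambda>x. u x - v x) x0"
    using x0 by (simp add: continuous_on_eq_continuous_at)
  ultimately obtain e where e: "e > 0" "\<And>y. dist x0 y < e \<Longrightarrow> u y - v y \<noteq> 0"
    using continuous_at_avoid[of x0 "\<lambda>x. u x - v x" 0] by auto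
  define a where "a = max 0 (x0 - e)"
  define b where "b = min 1 (x0 + e)"
  have "a < b" using x0 e(1) unfolding a_def b_def by auto
  have "x \<notin> {a<..<b}" if "x \<in> {0<..<1} \<longrightarrow> u x = v x" for x
    using that e(2)[of x] unfolding a_def b_def by (auto simp: dist_real_def abs_less_iff)
  then have "AE x in lborel. x \<notin> {a<..<b}"
    using ae by (auto elim: AE_mp)
  then have "emeasure lborel {a<..<b} = 0"
    by (subst (asm) AE_iff_measurable[of "{a<..<b}"]) auto
  with \<open>a < b\<close> show False by simp
qed

lemma abs_diff_le_int01_abs_deriv:
  fixes u u' :: "real \<Rightarrow> real"
  assumes u: "\<And>x. x \<in> {0..1} \<Longrightarrow> (u has_real_derivative u' x) (at x within {0..1})"
    and u': "continuous_on {0..1} u'" and x: "x \<in> {0..1}" and y: "y \<in> {0..1}"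
  shows "\<bar>u x - u y\<bar> \<le> int01 (\<lambda>x. \<bar>u' x\<bar>)"
proof -
  have abs_u': "continuous_on {0..1} (\<lambda>x. \<bar>u' x\<bar>)" using u' by (intro continuous_intros)
  have ordered: "\<bar>u b - u a\<bar> \<le> integral {0..1} (\<lambda>x. \<bar>u' x\<bar>)" if ab: "a \<le> b" "a \<in> {0..1}" "b \<in> {0..1}" for a b
  proof -
    have sub: "{a..b} \<subseteq> {0..1}" using ab by auto
    have "(u' has_integral (u b - u a)) {a..b}"
      using ab(1) sub
      by (intro fundamental_theorem_of_calculus)
         (auto simp: has_real_derivative_iff_has_vector_derivative[symmetric]
               intro: DERIV_subset[OF u])
    then have "\<bar>u b - u a\<bar> = norm (integral {a..b} u')" by (simp add: integral_unique)
    also have "\<dots> \<le> integral {a..b} (\<lambda>x. \<bar>u' x\<bar>)"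
      using sub u' abs_u'
      by (intro integral_norm_bound_integral integrable_continuous_interval) (auto intro: continuous_on_subset)
    also have "\<dots> \<le> integral {0..1} (\<lambda>x. \<bar>u' x\<bar>)"
      using sub abs_u'
      by (intro integral_subset_le integrable_continuous_interval) (auto intro: continuous_on_subset)
    finally show ?thesis .
  qed
  have "\<bar>u x - u y\<bar> \<le> integral {0..1} (\<lambda>x. \<bar>u' x\<bar>)"
  proof (cases "y \<le> x")
    case True
    then show ?thesis using ordered[of y x] x y by simp
  next
    case False
    then show ?thesis using ordered[of x y] x y by (simp add: abs_minus_commute)
  qed
  then show ?thesis using int01_eq_integral[OF abs_u'] by simp
qed

lemma exists_le_int01:
  assumes "continuous_on {0..1} u"
  obtains c where "c \<in> {0..1}" "u c \<le> int01 u"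
proof -
  obtain c where c: "c \<in> {0..1}" "\<And>x. x \<in> {0..1} \<Longrightarrow> u c \<le> u x"
    using continuous_attains_inf[OF compact_Icc _ assms] by auto
  have "int01 (\<lambda>_. u c) \<le> int01 u"
    using c(2) by (intro set_integral_mono continuous_on_set_integrable_01 assms) auto
  with c(1) show thesis by (intro that) auto
qed

lemma exists_ge_int01:
  assumes "continuous_on {0..1} u"
  obtains c where "c \<in> {0..1}" "int01 u \<le> u c"
proof -
  obtain c where c: "c \<in> {0..1}" "\<And>x. x \<in> {0..1} \<Longrightarrow> u x \<le> u c"
    using continuous_attains_sup[OF compact_Icc _ assms] by auto
  have "int01 u \<le> int01 (\<lambda>_. u c)"
    using c(2) by (intro set_integral_mono continuous_on_set_integrable_01 assms) auto
  with c(1) show thesis by (intro that) auto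
qed

lemma abs_le_H1_bound:
  fixes u u' :: "real \<Rightarrow> real"
  assumes u: "\<And>x. x \<in> {0..1} \<Longrightarrow> (u has_real_derivative u' x) (at x within {0..1})"
    and u': "continuous_on {0..1} u'" and x: "x \<in> {0..1}"
  shows "\<bar>u x\<bar> \<le> 1 + ((L2norm u)\<^sup>2 + (L2norm u')\<^sup>2) / 2"
proof -
  have "continuous_on {0..1} u" by (rule DERIV_continuous_on[OF u])
  then have "continuous_on {0..1} (\<lambda>x. (u x)\<^sup>2)" by (intro continuous_intros)
  then obtain c where c: "c \<in> {0..1}" "(u c)\<^sup>2 \<le> (L2norm u)\<^sup>2"
    unfolding L2norm_sq by (rule exists_le_int01)
  have "\<bar>u c\<bar> \<le> (1 + (L2norm u)\<^sup>2) / 2"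
    using abs_le_half_one_plus_sq[of "u c"] c(2) by simp
  moreover have "\<bar>u x - u c\<bar> \<le> int01 (\<lambda>x. \<bar>u' x\<bar>)"
    by (rule abs_diff_le_int01_abs_deriv[OF u u' x c(1)])
  moreover have "int01 (\<lambda>x. \<bar>u' x\<bar>) \<le> (1 + (L2norm u')\<^sup>2) / 2"
    using u' by (intro int01_abs_le_L2norm continuous_on_set_integrable_01 continuous_intros)
  moreover have "\<bar>u x\<bar> \<le> \<bar>u c\<bar> + \<bar>u x - u c\<bar>"
    using abs_triangle_ineq[of "u c" "u x - u c"] by simp
  ultimately show ?thesis by (simp add: field_simps)
qed

lemma DERIV_const_on_interval_eq_zero:
  assumes "(F has_real_derivative D) (at s)" "s \<in> {a<..<b}" "\<And>r. r \<in> {a<..<b} \<Longrightarrow> F r = c"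
  shows "D = 0"
proof -
  have "(F has_real_derivative 0) (at s)"
    using assms(2,3) by (intro has_field_derivative_transform_within_open[OF DERIV_const open_greaterThanLessThan]) auto
  with assms(1) show ?thesis by (rule DERIV_unique)
qed

lemma C1_has_real_derivative:
  fixes d :: "real \<Rightarrow> real"
  assumes "d C1_differentiable_on UNIV"
  shows "(d has_real_derivative deriv d y) (at y)"
  using assms unfolding C1_differentiable_on_eq DERIV_deriv_iff_real_differentiable by blast

lemma mean_value_from_zero:
  fixes d :: "real \<Rightarrow> real"
  assumes d: "d C1_differentiable_on UNIV" "d 0 = 0" and y: "y \<noteq> 0"
  obtains z where "z \<noteq> 0" "\<bar>z\<bar> \<le> \<bar>y\<bar>" "d y = y * deriv d z"
proof (cases "0 < y")
  case True
  then obtain z where "0 < z" "z < y" "d y - d 0 = (y - 0) * deriv d z"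
    using MVT2[of 0 y d "deriv d"] C1_has_real_derivative[OF d(1)] by blast
  with d(2) show thesis by (intro that[of z]) auto
next
  case False
  with y have "y < 0" by simp
  then obtain z where "y < z" "z < 0" "d 0 - d y = (0 - y) * deriv d z"
    using MVT2[of y 0 d "deriv d"] C1_has_real_derivative[OF d(1)] by blast
  with d(2) show thesis by (intro that[of z]) auto
qed

lemma deriv_gt_imp_mult_le:
  fixes d :: "real \<Rightarrow> real"
  assumes d: "d C1_differentiable_on UNIV" "d 0 = 0" and gt: "\<forall>y. c < deriv d y"
  shows "0 \<le> y \<Longrightarrow> c * y \<le> d y" and "y \<le> 0 \<Longrightarrow> d y \<le> c * y"
proof -
  have slope: "\<exists>z. d y = y * deriv d z \<and> c \<le> deriv d z" if y: "y \<noteq> 0" for y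
  proof -
    obtain z where "d y = y * deriv d z" using mean_value_from_zero[OF d y] by blast
    then show ?thesis using gt less_imp_le by blast
  qed
  show "c * y \<le> d y" if "0 \<le> y"
    using d(2) slope[of y] mult_left_mono[of c _ y] that by (cases "y = 0") (auto simp: mult.commute)
  show "d y \<le> c * y" if "y \<le> 0"
    using d(2) slope[of y] mult_left_mono_neg[of c _ y] that by (cases "y = 0") (auto simp: mult.commute)
qed

lemma deriv_gt_imp_le_divide:
  fixes d :: "real \<Rightarrow> real"
  assumes d: "d C1_differentiable_on UNIV" "d 0 = 0" and gt: "\<forall>y. c < deriv d y"
    and c: "0 < c" and K: "0 \<le> K"
  shows "d y \<le> K \<Longrightarrow> y \<le> K / c" and "- K \<le> d y \<Longrightarrow> - (K / c) \<le> y"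
proof -
  have "0 \<le> K / c" using K c by simp
  show "y \<le> K / c" if "d y \<le> K"
  proof (cases "0 \<le> y")
    case True
    then have "c * y \<le> K" using deriv_gt_imp_mult_le(1)[OF d gt True] that by linarith
    then show ?thesis using c by (simp add: pos_le_divide_eq mult.commute)
  next
    case False
    then show ?thesis using \<open>0 \<le> K / c\<close> by linarith
  qed
  show "- (K / c) \<le> y" if "- K \<le> d y"
  proof (cases "y \<le> 0")
    case True
    then have "- K \<le> c * y" using deriv_gt_imp_mult_le(2)[OF d gt True] that by linarith
    then show ?thesis using pos_divide_le_eq[OF c, of "- K" y] by (simp add: mult.commute)
  next
    case False
    then show ?thesis using \<open>0 \<le> K / c\<close> by linarith
  qed
qed

lemma abs_le_of_deriv_growth:
  fixes d :: "real \<Rightarrow> real"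
  assumes d: "d C1_differentiable_on UNIV" "d 0 = 0" and d12: "0 \<le> d1" "0 \<le> d2" and q: "0 \<le> q"
    and growth: "\<forall>y. y \<noteq> 0 \<longrightarrow> \<bar>deriv d y\<bar> \<le> d1 + d2 * \<bar>y\<bar> powr q"
    and y: "\<bar>y\<bar> \<le> S"
  shows "\<bar>d y\<bar> \<le> (d1 + d2 * S powr q) * S"
proof (cases "y = 0")
  case True
  then show ?thesis using d(2) d12 y by simp
next
  case False
  then obtain z where z: "z \<noteq> 0" "\<bar>z\<bar> \<le> \<bar>y\<bar>" "d y = y * deriv d z"
    by (rule mean_value_from_zero[OF d])
  have "\<bar>z\<bar> powr q \<le> S powr q" using z(2) y q by (intro powr_mono2) auto
  then have "\<bar>deriv d z\<bar> \<le> d1 + d2 * S powr q"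
    using growth z(1) mult_left_mono[OF _ d12(2)] by (meson add_left_mono order_trans)
  then have "\<bar>y\<bar> * \<bar>deriv d z\<bar> \<le> S * (d1 + d2 * S powr q)"
    using y by (intro mult_mono) auto
  then show ?thesis
    unfolding z(3) abs_mult by (simp add: mult.commute)
qed

section \<open>Energy decay for a linear damped wave system\<close>

lemma dissipation_nonpos:
  fixes u v u' v' a b k :: "real \<Rightarrow> real"
  assumes u: "\<And>x. x \<in> {0..1} \<Longrightarrow> (u has_real_derivative u' x) (at x within {0..1})"
    and v: "\<And>x. x \<in> {0..1} \<Longrightarrow> (v has_real_derivative v' x) (at x within {0..1})"
    and int: "(\<lambda>x. u x * a x + v x * b x) integrable_on {0..1}"
    and a: "\<And>x. x \<in> {0<..<1} \<Longrightarrow> a x = - v' x"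
    and b: "\<And>x. x \<in> {0<..<1} \<Longrightarrow> b x = - u' x - k x * v x"
    and k: "\<And>x. x \<in> {0<..<1} \<Longrightarrow> 0 \<le> k x"
    and bdry: "u 0 = 0" "u 1 = 0"
  shows "integral {0..1} (\<lambda>x. u x * a x + v x * b x) \<le> 0"
proof -
  have "((\<lambda>x. - (u' x * v x + u x * v' x)) has_integral (- (u 1 * v 1) - - (u 0 * v 0))) {0..1}"
    using u v
    by (intro fundamental_theorem_of_calculus)
       (auto simp: has_real_derivative_iff_has_vector_derivative[symmetric] intro!: derivative_eq_intros)
  then have flux: "((\<lambda>x. - (u' x * v x + u x * v' x)) has_integral 0) {0<..<1}"
    using bdry by (simp add: has_integral_Icc_iff_Ioo)
  have "((\<lambda>x. u x * a x + v x * b x) has_integral integral {0..1} (\<lambda>x. u x * a x + v x * b x)) {0<..<1}"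
    using int by (simp add: has_integral_Icc_iff_Ioo has_integral_integral)
  then show ?thesis
  proof (rule has_integral_le[OF _ flux])
    fix x :: real assume x: "x \<in> {0<..<1}"
    have "0 \<le> k x * (v x)\<^sup>2" using k[OF x] by simp
    then show "u x * a x + v x * b x \<le> - (u' x * v x + u x * v' x)"
      unfolding a[OF x] b[OF x] by (simp add: algebra_simps power2_eq_square)
  qed
qed

lemma energy_has_real_derivative:
  fixes u v ut vt :: "real \<Rightarrow> real \<Rightarrow> real"
  assumes ut: "\<And>x s. x \<in> {0..1} \<Longrightarrow> s \<in> {0..T} \<Longrightarrow> ((\<lambda>s. u x s) has_real_derivative ut x s) (at s within {0..T})"
    and vt: "\<And>x s. x \<in> {0..1} \<Longrightarrow> s \<in> {0..T} \<Longrightarrow> ((\<lambda>s. v x s) has_real_derivative vt x s) (at s within {0..T})"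
    and cont: "continuous_on ({0..1} \<times> {0..T}) (\<lambda>z. u (fst z) (snd z))"
      "continuous_on ({0..1} \<times> {0..T}) (\<lambda>z. v (fst z) (snd z))"
      "continuous_on ({0..1} \<times> {0..T}) (\<lambda>z. ut (fst z) (snd z))"
      "continuous_on ({0..1} \<times> {0..T}) (\<lambda>z. vt (fst z) (snd z))"
    and s: "s \<in> {0..T}"
  shows "((\<lambda>s. integral {0..1} (\<lambda>x. (u x s)\<^sup>2 + (v x s)\<^sup>2)) has_real_derivative
      2 * integral {0..1} (\<lambda>x. u x s * ut x s + v x s * vt x s)) (at s within {0..T})"
proof -
  define P where "P x s = u x s * ut x s + v x s * vt x s" for x s
  have P: "continuous_on ({0..1} \<times> {0..T}) (\<lambda>z. P (fst z) (snd z))"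
    unfolding P_def using cont by (intro continuous_intros)
  have "((\<lambda>s. integral (cbox 0 1) (\<lambda>x. (u x s)\<^sup>2 + (v x s)\<^sup>2)) has_real_derivative
      integral (cbox 0 1) (\<lambda>x. 2 * P x s)) (at s within {0..T})"
  proof (rule leibniz_rule_field_derivative)
    show "((\<lambda>s. (u x s)\<^sup>2 + (v x s)\<^sup>2) has_real_derivative 2 * P x s) (at s within {0..T})"
      if "s \<in> {0..T}" "x \<in> cbox 0 1" for s x
      using ut[of x s] vt[of x s] that unfolding P_def
      by (auto intro!: derivative_eq_intros simp: algebra_simps)
    show "(\<lambda>x. (u x s)\<^sup>2 + (v x s)\<^sup>2) integrable_on cbox 0 1" if "s \<in> {0..T}" for s
    proof -
      have "{0..1} \<times> {s} \<subseteq> {0..1} \<times> {0..T}" using that by auto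
      from continuous_on_slice[OF cont(1) this] continuous_on_slice[OF cont(2) this] show ?thesis
        by (auto intro!: integrable_continuous_interval continuous_intros)
    qed
    show "continuous_on ({0..T} \<times> cbox 0 1) (\<lambda>(s, x). 2 * P x s)"
      using continuous_on_swap_args[OF P, of "{0..1}" "{0..T}"]
      by (auto intro: continuous_on_mult_left simp: case_prod_beta')
  qed (use s in auto)
  then have "((\<lambda>s. integral {0..1} (\<lambda>x. (u x s)\<^sup>2 + (v x s)\<^sup>2)) has_real_derivative
      2 * integral {0..1} (\<lambda>x. P x s)) (at s within {0..T})"
    by simp
  then show ?thesis unfolding P_def .
qed

lemma damped_wave_energy_decreasing:
  fixes u v ux vx ut vt k :: "real \<Rightarrow> real \<Rightarrow> real"
  assumes ut: "\<And>x s. x \<in> {0..1} \<Longrightarrow> s \<in> {0..T} \<Longrightarrow> ((\<lambda>s. u x s) has_real_derivative ut x s) (at s within {0..T})"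
    and vt: "\<And>x s. x \<in> {0..1} \<Longrightarrow> s \<in> {0..T} \<Longrightarrow> ((\<lambda>s. v x s) has_real_derivative vt x s) (at s within {0..T})"
    and ux: "\<And>x s. x \<in> {0..1} \<Longrightarrow> s \<in> {0<..<T} \<Longrightarrow> ((\<lambda>x. u x s) has_real_derivative ux x s) (at x within {0..1})"
    and vx: "\<And>x s. x \<in> {0..1} \<Longrightarrow> s \<in> {0<..<T} \<Longrightarrow> ((\<lambda>x. v x s) has_real_derivative vx x s) (at x within {0..1})"
    and cont: "continuous_on ({0..1} \<times> {0..T}) (\<lambda>z. u (fst z) (snd z))"
      "continuous_on ({0..1} \<times> {0..T}) (\<lambda>z. v (fst z) (snd z))"
      "continuous_on ({0..1} \<times> {0..T}) (\<lambda>z. ut (fst z) (snd z))"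
      "continuous_on ({0..1} \<times> {0..T}) (\<lambda>z. vt (fst z) (snd z))"
    and eq_u: "\<And>x s. x \<in> {0<..<1} \<Longrightarrow> s \<in> {0<..<T} \<Longrightarrow> ut x s = - vx x s"
    and eq_v: "\<And>x s. x \<in> {0<..<1} \<Longrightarrow> s \<in> {0<..<T} \<Longrightarrow> vt x s = - ux x s - k x s * v x s"
    and k: "\<And>x s. x \<in> {0<..<1} \<Longrightarrow> s \<in> {0<..<T} \<Longrightarrow> 0 \<le> k x s"
    and bdry: "\<And>s. s \<in> {0<..<T} \<Longrightarrow> u 0 s = 0 \<and> u 1 s = 0"
    and t: "t \<in> {0..T}"
  shows "integral {0..1} (\<lambda>x. (u x t)\<^sup>2 + (v x t)\<^sup>2) \<le> integral {0..1} (\<lambda>x. (u x 0)\<^sup>2 + (v x 0)\<^sup>2)"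
proof -
  define E where "E s = integral {0..1} (\<lambda>x. (u x s)\<^sup>2 + (v x s)\<^sup>2)" for s
  define P where "P s = integral {0..1} (\<lambda>x. u x s * ut x s + v x s * vt x s)" for s
  have E': "(E has_real_derivative 2 * P s) (at s within {0..T})" if "s \<in> {0..T}" for s
    unfolding E_def P_def using ut vt cont that by (rule energy_has_real_derivative)
  have "P s \<le> 0" if s: "s \<in> {0<..<T}" for s
    unfolding P_def
  proof (rule dissipation_nonpos)
    have "{0..1} \<times> {s} \<subseteq> {0..1} \<times> {0..T}" using s by auto
    from continuous_on_slice[OF cont(1) this] continuous_on_slice[OF cont(2) this]
      continuous_on_slice[OF cont(3) this] continuous_on_slice[OF cont(4) this]
    show "(\<lambda>x. u x s * ut x s + v x s * vt x s) integrable_on {0..1}"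
      by (auto intro!: integrable_continuous_interval continuous_intros)
    show "((\<lambda>x. u x s) has_real_derivative ux x s) (at x within {0..1})"
      "((\<lambda>x. v x s) has_real_derivative vx x s) (at x within {0..1})" if "x \<in> {0..1}" for x
      using ux[OF that s] vx[OF that s] .
    show "ut x s = - vx x s" "vt x s = - ux x s - k x s * v x s" "0 \<le> k x s" if "x \<in> {0<..<1}" for x
      using eq_u[OF that s] eq_v[OF that s] k[OF that s] .
  qed (use bdry[OF s] in auto)
  then have "\<exists>D. (E has_real_derivative D) (at s) \<and> D \<le> 0" if "0 < s" "s < t" for s
    using E'[of s] that t by (auto simp: at_within_Icc_at)
  moreover have "continuous_on {0..t} E"
    by (rule continuous_on_subset[OF DERIV_continuous_on[OF E']]) (use t in auto)
  ultimately have "E t \<le> E 0"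
  proof (rule DERIV_nonpos_imp_decreasing_open[of 0 t E, rotated])
    show "0 \<le> t" using t by simp
  qed
  then show ?thesis unfolding E_def .
qed

section \<open>Solutions of the damped wave system\<close>

text \<open>\<open>1 + M0\<^sup>2 / 2\<close> bounds \<open>\<bar>m(x,0)\<bar>\<close> (\<open>abs_le_H1_bound\<close>), so the last term bounds
  \<open>3 d(m(x,0))\<^sup>2\<close>.\<close>
definition energy_bound :: "real \<Rightarrow> real \<Rightarrow> real \<Rightarrow> real \<Rightarrow> real \<Rightarrow> real \<Rightarrow> real \<Rightarrow> real" where
  "energy_bound d1 d2 q F G P0 M0 =
    (let S = 1 + M0\<^sup>2 / 2 in 2 * F\<^sup>2 + 2 * M0\<^sup>2 + 3 * G\<^sup>2 + 3 * P0\<^sup>2 + 3 * ((d1 + d2 * S powr q) * S)\<^sup>2)"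

text \<open>\<open>E\<close> bounds the energy \<open>\<parallel>p\<^sub>t\<parallel>\<^sup>2 + \<parallel>m\<^sub>t\<parallel>\<^sup>2\<close>, and \<open>S\<close> bounds \<open>\<bar>m\<bar>\<close>.\<close>
definition solution_bound ::
    "real \<Rightarrow> real \<Rightarrow> real \<Rightarrow> real \<Rightarrow> real \<Rightarrow> real \<Rightarrow> real \<Rightarrow> real \<Rightarrow> real \<Rightarrow> real" where
  "solution_bound d0 d1 d2 q F G H P0 M0 =
    (let E = energy_bound d1 d2 q F G P0 M0;
         S = ((1 + G\<^sup>2) / 2 + (1 + E) / 2 + H) / d0 + (1 + 2 * F\<^sup>2 + 2 * E) / 2
     in 2 * sqrt E + sqrt (S\<^sup>2 + 2 * F\<^sup>2 + 2 * E))"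

locale damped_wave_solution =
  fixes d :: "real \<Rightarrow> real" and d0 d1 d2 q :: real
    and f g :: "real \<Rightarrow> real" and h0 h1 T :: real
    and p px pt pxt ptt m mx mt mxt mtt :: "real \<Rightarrow> real \<Rightarrow> real"
  assumes d_C1: "d C1_differentiable_on UNIV" and d_zero: "d 0 = 0"
    and d0_pos: "0 < d0" and d1_nonneg: "0 \<le> d1" and d2_nonneg: "0 \<le> d2" and q_nonneg: "0 \<le> q"
    and deriv_d_gt: "\<forall>y. d0 < deriv d y"
    and deriv_d_growth: "\<forall>y. y \<noteq> 0 \<longrightarrow> \<bar>deriv d y\<bar> \<le> d1 + d2 * \<bar>y\<bar> powr q"
    and f_L2: "in_L2 f" and g_L2: "in_L2 g" and T_pos: "0 < T"
    and p_partials: "has_second_partials ({0..1} \<times> {0..T}) p px pt pxt ptt"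
    and m_partials: "has_second_partials ({0..1} \<times> {0..T}) m mx mt mxt mtt"
    and eq_p: "\<And>t. t \<in> {0..T} \<Longrightarrow> AE x in lborel. x \<in> {0<..<1} \<longrightarrow> pt x t + mx x t = f x"
    and eq_m: "\<And>t. t \<in> {0..T} \<Longrightarrow>
      AE x in lborel. x \<in> {0<..<1} \<longrightarrow> mt x t + px x t + d (m x t) = g x"
    and boundary: "\<And>t. t \<in> {0..T} \<Longrightarrow> p 0 t = h0 \<and> p 1 t = h1"
begin

lemma zero_in_time_interval: "0 \<in> {0..T}"
  using T_pos by simp

lemma derivatives:
  assumes "x \<in> {0..1}" "s \<in> {0..T}"
  shows "((\<lambda>y. p y s) has_real_derivative px x s) (at x within A)"
    and "((\<lambda>y. m y s) has_real_derivative mx x s) (at x within A)"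
    and "((\<lambda>y. pt y s) has_real_derivative pxt x s) (at x within A)"
    and "((\<lambda>y. mt y s) has_real_derivative mxt x s) (at x within A)"
    and "((\<lambda>r. p x r) has_real_derivative pt x s) (at s within A)"
    and "((\<lambda>r. m x r) has_real_derivative mt x s) (at s within A)"
    and "((\<lambda>r. px x r) has_real_derivative pxt x s) (at s within A)"
    and "((\<lambda>r. mx x r) has_real_derivative mxt x s) (at s within A)"
    and "((\<lambda>r. pt x r) has_real_derivative ptt x s) (at s within A)"
    and "((\<lambda>r. mt x r) has_real_derivative mtt x s) (at s within A)"
proof -
  have xs: "(x, s) \<in> {0..1} \<times> {0..T}" using assms by simp
  have p: "has_partials ({0..1} \<times> {0..T}) p px pt" "has_partials ({0..1} \<times> {0..T}) pt pxt ptt"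
    and m: "has_partials ({0..1} \<times> {0..T}) m mx mt" "has_partials ({0..1} \<times> {0..T}) mt mxt mtt"
    using p_partials m_partials unfolding has_second_partials_def by blast+
  show "((\<lambda>y. p y s) has_real_derivative px x s) (at x within A)"
    "((\<lambda>y. m y s) has_real_derivative mx x s) (at x within A)"
    "((\<lambda>y. pt y s) has_real_derivative pxt x s) (at x within A)"
    "((\<lambda>y. mt y s) has_real_derivative mxt x s) (at x within A)"
    using has_partials_x[OF p(1) xs] has_partials_x[OF m(1) xs]
      has_partials_x[OF p(2) xs] has_partials_x[OF m(2) xs] .
  show "((\<lambda>r. p x r) has_real_derivative pt x s) (at s within A)"
    "((\<lambda>r. m x r) has_real_derivative mt x s) (at s within A)"
    "((\<lambda>r. pt x r) has_real_derivative ptt x s) (at s within A)"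
    "((\<lambda>r. mt x r) has_real_derivative mtt x s) (at s within A)"
    using has_partials_t[OF p(1) xs] has_partials_t[OF m(1) xs]
      has_partials_t[OF p(2) xs] has_partials_t[OF m(2) xs] .
  show "((\<lambda>r. px x r) has_real_derivative pxt x s) (at s within A)"
    "((\<lambda>r. mx x r) has_real_derivative mxt x s) (at s within A)"
    using has_second_partials_xt[OF p_partials xs] has_second_partials_xt[OF m_partials xs] .
qed

lemma continuous_on_slices:
  assumes "s \<in> {0..T}"
  shows "continuous_on {0..1} (\<lambda>x. px x s)" "continuous_on {0..1} (\<lambda>x. pt x s)"
    "continuous_on {0..1} (\<lambda>x. m x s)" "continuous_on {0..1} (\<lambda>x. mx x s)"
    "continuous_on {0..1} (\<lambda>x. mt x s)"
proof -
  have sub: "{0..1} \<times> {s} \<subseteq> {0..1} \<times> {0..T}" using assms by auto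
  note p = has_second_partials_continuous_on[OF p_partials]
  note m = has_second_partials_continuous_on[OF m_partials]
  show "continuous_on {0..1} (\<lambda>x. px x s)" "continuous_on {0..1} (\<lambda>x. pt x s)"
    "continuous_on {0..1} (\<lambda>x. m x s)" "continuous_on {0..1} (\<lambda>x. mx x s)"
    "continuous_on {0..1} (\<lambda>x. mt x s)"
    using continuous_on_slice[OF p(2) sub] continuous_on_slice[OF p(3) sub]
      continuous_on_slice[OF m(1) sub] continuous_on_slice[OF m(2) sub]
      continuous_on_slice[OF m(3) sub] .
qed

lemma continuous_on_d_m:
  assumes "s \<in> {0..T}"
  shows "continuous_on {0..1} (\<lambda>x. d (m x s))"
proof -
  have "continuous_on UNIV d"
    by (rule DERIV_continuous_on[OF C1_has_real_derivative[OF d_C1]])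
  from continuous_on_compose2[OF this continuous_on_slices(3)[OF assms]] show ?thesis by simp
qed

lemma eq_p_time_independent:
  assumes x: "x \<in> {0<..<1}" and s: "s \<in> {0..T}"
  shows "pt x s + mx x s = pt x 0 + mx x 0"
proof (rule continuous_AE_eq_imp_eq[OF _ _ _ x])
  show "continuous_on {0..1} (\<lambda>x. pt x s + mx x s)" "continuous_on {0..1} (\<lambda>x. pt x 0 + mx x 0)"
    using continuous_on_slices[OF s] continuous_on_slices[OF zero_in_time_interval]
    by (simp_all add: continuous_on_add)
  show "AE x in lborel. x \<in> {0<..<1} \<longrightarrow> pt x s + mx x s = pt x 0 + mx x 0"
    using eq_p[OF s] eq_p[OF zero_in_time_interval] by eventually_elim auto
qed

lemma eq_m_time_independent:
  assumes x: "x \<in> {0<..<1}" and s: "s \<in> {0..T}"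
  shows "mt x s + px x s + d (m x s) = mt x 0 + px x 0 + d (m x 0)"
proof (rule continuous_AE_eq_imp_eq[OF _ _ _ x])
  show "continuous_on {0..1} (\<lambda>x. mt x s + px x s + d (m x s))"
    "continuous_on {0..1} (\<lambda>x. mt x 0 + px x 0 + d (m x 0))"
    using continuous_on_slices[OF s] continuous_on_slices[OF zero_in_time_interval]
      continuous_on_d_m[OF s] continuous_on_d_m[OF zero_in_time_interval]
    by (simp_all add: continuous_on_add)
  show "AE x in lborel. x \<in> {0<..<1} \<longrightarrow> mt x s + px x s + d (m x s) = mt x 0 + px x 0 + d (m x 0)"
    using eq_m[OF s] eq_m[OF zero_in_time_interval] by eventually_elim auto
qed

lemma ptt_eq:
  assumes x: "x \<in> {0<..<1}" and s: "s \<in> {0<..<T}"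
  shows "ptt x s = - mxt x s"
proof -
  have "x \<in> {0..1}" "s \<in> {0..T}" using x s by auto
  then have "((\<lambda>r. pt x r + mx x r) has_real_derivative ptt x s + mxt x s) (at s)"
    by (intro DERIV_add derivatives)
  moreover have "pt x r + mx x r = pt x 0 + mx x 0" if "r \<in> {0<..<T}" for r
    using that by (intro eq_p_time_independent[OF x]) simp
  ultimately have "ptt x s + mxt x s = 0"
    by (rule DERIV_const_on_interval_eq_zero[OF _ s])
  then show ?thesis by simp
qed

lemma mtt_eq:
  assumes x: "x \<in> {0<..<1}" and s: "s \<in> {0<..<T}"
  shows "mtt x s = - pxt x s - deriv d (m x s) * mt x s"
proof -
  have "x \<in> {0..1}" "s \<in> {0..T}" using x s by auto
  then have "((\<lambda>r. mt x r + px x r + d (m x r)) has_real_derivative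
      mtt x s + pxt x s + deriv d (m x s) * mt x s) (at s)"
    by (intro DERIV_add derivatives DERIV_chain2[OF C1_has_real_derivative[OF d_C1]])
  moreover have "mt x r + px x r + d (m x r) = mt x 0 + px x 0 + d (m x 0)" if "r \<in> {0<..<T}" for r
    using that by (intro eq_m_time_independent[OF x]) simp
  ultimately have "mtt x s + pxt x s + deriv d (m x s) * mt x s = 0"
    by (rule DERIV_const_on_interval_eq_zero[OF _ s])
  then show ?thesis by simp
qed

lemma pt_boundary:
  assumes s: "s \<in> {0<..<T}"
  shows "pt 0 s = 0" "pt 1 s = 0"
proof -
  have s': "s \<in> {0..T}" using s by simp
  have "((\<lambda>r. p 0 r) has_real_derivative pt 0 s) (at s)" "((\<lambda>r. p 1 r) has_real_derivative pt 1 s) (at s)"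
    using s' by (auto intro: derivatives(5))
  moreover have "p 0 r = h0" "p 1 r = h1" if "r \<in> {0<..<T}" for r
    using boundary[of r] that by auto
  ultimately show "pt 0 s = 0" "pt 1 s = 0"
    by (metis DERIV_const_on_interval_eq_zero s)+
qed

lemma energy_decreasing:
  assumes t: "t \<in> {0..T}"
  shows "(L2norm (\<lambda>x. pt x t))\<^sup>2 + (L2norm (\<lambda>x. mt x t))\<^sup>2
    \<le> (L2norm (\<lambda>x. pt x 0))\<^sup>2 + (L2norm (\<lambda>x. mt x 0))\<^sup>2"
proof -
  note p = has_second_partials_continuous_on[OF p_partials]
  note m = has_second_partials_continuous_on[OF m_partials]
  have "integral {0..1} (\<lambda>x. (pt x t)\<^sup>2 + (mt x t)\<^sup>2) \<le> integral {0..1} (\<lambda>x. (pt x 0)\<^sup>2 + (mt x 0)\<^sup>2)"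
  proof (rule damped_wave_energy_decreasing[where k = "\<lambda>x s. deriv d (m x s)"])
    fix x s :: real
    assume "x \<in> {0..1}" "s \<in> {0..T}"
    then show "((\<lambda>s. pt x s) has_real_derivative ptt x s) (at s within {0..T})"
      "((\<lambda>s. mt x s) has_real_derivative mtt x s) (at s within {0..T})"
      by (rule derivatives(9), rule derivatives(10))
  next
    fix x s :: real
    assume "x \<in> {0..1}" "s \<in> {0<..<T}"
    then have "x \<in> {0..1}" "s \<in> {0..T}" by auto
    then show "((\<lambda>x. pt x s) has_real_derivative pxt x s) (at x within {0..1})"
      "((\<lambda>x. mt x s) has_real_derivative mxt x s) (at x within {0..1})"
      by (rule derivatives(3), rule derivatives(4))
  next
    fix x s :: real
    assume "x \<in> {0<..<1}" "s \<in> {0<..<T}"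
    then show "ptt x s = - mxt x s" "mtt x s = - pxt x s - deriv d (m x s) * mt x s"
      by (rule ptt_eq, rule mtt_eq)
    show "0 \<le> deriv d (m x s)"
      using deriv_d_gt d0_pos by (metis less_imp_le order.strict_trans)
  qed (use p m pt_boundary t in auto)
  then show ?thesis
    using L2norm_sq_add_eq_integral[OF continuous_on_slices(2,5)[OF t]]
      L2norm_sq_add_eq_integral[OF continuous_on_slices(2,5)[OF zero_in_time_interval]]
    by simp
qed

lemma H1norm_slice_eq:
  assumes t: "t \<in> {0..T}"
  shows "H1norm (\<lambda>x. p x t) = sqrt ((L2norm (\<lambda>x. p x t))\<^sup>2 + (L2norm (\<lambda>x. px x t))\<^sup>2)"
    and "H1norm (\<lambda>x. m x t) = sqrt ((L2norm (\<lambda>x. m x t))\<^sup>2 + (L2norm (\<lambda>x. mx x t))\<^sup>2)"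
  using t by (auto intro!: H1norm_eq derivatives(1,2))

lemma initial_energy_le:
  "(L2norm (\<lambda>x. pt x 0))\<^sup>2 + (L2norm (\<lambda>x. mt x 0))\<^sup>2
    \<le> energy_bound d1 d2 q (L2norm f) (L2norm g) (H1norm (\<lambda>x. p x 0)) (H1norm (\<lambda>x. m x 0))"
proof -
  define M0 where "M0 = H1norm (\<lambda>x. m x 0)"
  define S where "S = 1 + M0\<^sup>2 / 2"
  define D where "D = (d1 + d2 * S powr q) * S"
  note zero = zero_in_time_interval
  have P0: "(L2norm (\<lambda>x. px x 0))\<^sup>2 \<le> (H1norm (\<lambda>x. p x 0))\<^sup>2"
    and M0: "(L2norm (\<lambda>x. m x 0))\<^sup>2 + (L2norm (\<lambda>x. mx x 0))\<^sup>2 = M0\<^sup>2"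
    unfolding M0_def H1norm_slice_eq[OF zero] by simp_all
  have d_m0: "\<bar>d (m x 0)\<bar> \<le> D" if "x \<in> {0..1}" for x
  proof -
    have "\<bar>m x 0\<bar> \<le> S"
      using abs_le_H1_bound[OF derivatives(2)[OF _ zero] continuous_on_slices(4)[OF zero] that] M0
      unfolding S_def by simp
    then show ?thesis
      unfolding D_def using d_C1 d_zero d1_nonneg d2_nonneg q_nonneg deriv_d_growth
      by (rule abs_le_of_deriv_growth[rotated 6])
  qed
  have sq: "set_integrable lborel {0<..<1} (\<lambda>x. (f x)\<^sup>2)" "set_integrable lborel {0<..<1} (\<lambda>x. (g x)\<^sup>2)"
    "set_integrable lborel {0<..<1} (\<lambda>x. (mx x 0)\<^sup>2)" "set_integrable lborel {0<..<1} (\<lambda>x. (px x 0)\<^sup>2)"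
    using f_L2 g_L2 continuous_on_slices(1,4)[OF zero] unfolding in_L2_def
    by (auto intro: continuous_on_set_integrable_01 continuous_on_power)
  have "(L2norm (\<lambda>x. pt x 0))\<^sup>2 \<le> 2 * (L2norm f)\<^sup>2 + 2 * (L2norm (\<lambda>x. mx x 0))\<^sup>2"
    using eq_p[OF zero] by (intro L2norm_sq_le_AE_diff sq) (auto elim: AE_mp)
  moreover have "(L2norm (\<lambda>x. mt x 0))\<^sup>2 \<le> 3 * (L2norm g)\<^sup>2 + 3 * (L2norm (\<lambda>x. px x 0))\<^sup>2 + 3 * D\<^sup>2"
    using eq_m[OF zero] d_m0
    by (intro L2norm_sq_le_AE_diff3[where c = "\<lambda>x. d (m x 0)"] sq) (auto elim: AE_mp)
  moreover have "0 \<le> (L2norm (\<lambda>x. m x 0))\<^sup>2" by simp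
  ultimately show ?thesis
    using P0 M0 unfolding energy_bound_def Let_def M0_def[symmetric] S_def[symmetric] D_def[symmetric]
    by linarith
qed

lemma mx_L2_sq_le:
  assumes t: "t \<in> {0..T}"
  shows "(L2norm (\<lambda>x. mx x t))\<^sup>2 \<le> 2 * (L2norm f)\<^sup>2 + 2 * (L2norm (\<lambda>x. pt x t))\<^sup>2"
proof (rule L2norm_sq_le_AE_diff)
  show "set_integrable lborel {0<..<1} (\<lambda>x. (f x)\<^sup>2)" using f_L2 unfolding in_L2_def by simp
  show "set_integrable lborel {0<..<1} (\<lambda>x. (pt x t)\<^sup>2)"
    using continuous_on_slices(2)[OF t] by (intro continuous_on_set_integrable_01 continuous_on_power)
  show "AE x in lborel. x \<in> {0<..<1} \<longrightarrow> mx x t = f x - pt x t"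
    using eq_p[OF t] by (auto elim: AE_mp)
qed

lemma int01_d_m_eq:
  assumes t: "t \<in> {0..T}"
  shows "int01 (\<lambda>x. d (m x t)) = int01 g - int01 (\<lambda>x. mt x t) - (h1 - h0)"
proof -
  have int: "set_integrable lborel {0<..<1} g" "set_integrable lborel {0<..<1} (\<lambda>x. mt x t)"
    "set_integrable lborel {0<..<1} (\<lambda>x. px x t)"
    using in_L2_set_integrable[OF g_L2] continuous_on_slices(1,5)[OF t]
    by (auto intro: continuous_on_set_integrable_01)
  have "((\<lambda>x. px x t) has_integral (p 1 t - p 0 t)) {0..1}"
    using t by (intro fundamental_theorem_of_calculus)
      (auto simp: has_real_derivative_iff_has_vector_derivative[symmetric] intro: derivatives(1))
  then have px: "int01 (\<lambda>x. px x t) = h1 - h0"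
    using int01_eq_integral[OF continuous_on_slices(1)[OF t]] boundary[OF t] by (simp add: integral_unique)
  have "int01 (\<lambda>x. d (m x t)) = int01 (\<lambda>x. g x - mt x t - px x t)"
  proof (rule int01_cong_AE)
    show "set_integrable lborel {0<..<1} (\<lambda>x. d (m x t))"
      by (rule continuous_on_set_integrable_01[OF continuous_on_d_m[OF t]])
    show "set_integrable lborel {0<..<1} (\<lambda>x. g x - mt x t - px x t)"
      using int by (intro set_integral_diff)
    show "AE x in lborel. x \<in> {0<..<1} \<longrightarrow> d (m x t) = g x - mt x t - px x t"
      using eq_m[OF t] by (auto elim: AE_mp)
  qed
  also have "\<dots> = int01 g - int01 (\<lambda>x. mt x t) - (h1 - h0)"
    using int px by simp
  finally show ?thesis .
qed

lemma abs_m_le: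
  assumes t: "t \<in> {0..T}" and x: "x \<in> {0..1}"
  shows "\<bar>m x t\<bar> \<le> (int01 (\<lambda>x. \<bar>g x\<bar>) + int01 (\<lambda>x. \<bar>mt x t\<bar>) + \<bar>h0\<bar> + \<bar>h1\<bar>) / d0
    + int01 (\<lambda>x. \<bar>mx x t\<bar>)"
proof -
  define K where "K = \<bar>int01 (\<lambda>x. d (m x t))\<bar>"
  have "\<bar>int01 g\<bar> \<le> int01 (\<lambda>x. \<bar>g x\<bar>)" "\<bar>int01 (\<lambda>x. mt x t)\<bar> \<le> int01 (\<lambda>x. \<bar>mt x t\<bar>)"
    using set_integral_norm_bound[OF in_L2_set_integrable[OF g_L2]]
      set_integral_norm_bound[OF continuous_on_set_integrable_01[OF continuous_on_slices(5)[OF t]]]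
    by simp_all
  then have K: "K \<le> int01 (\<lambda>x. \<bar>g x\<bar>) + int01 (\<lambda>x. \<bar>mt x t\<bar>) + \<bar>h0\<bar> + \<bar>h1\<bar>"
    unfolding K_def int01_d_m_eq[OF t] by linarith
  have "0 \<le> K" unfolding K_def by simp
  note d_bounds = deriv_gt_imp_le_divide[OF d_C1 d_zero deriv_d_gt d0_pos this]
  obtain a where a: "a \<in> {0..1}" "d (m a t) \<le> int01 (\<lambda>x. d (m x t))"
    using exists_le_int01[OF continuous_on_d_m[OF t]] by blast
  then have "d (m a t) \<le> K" unfolding K_def by linarith
  then have upper: "m a t \<le> K / d0" by (rule d_bounds(1))
  obtain b where b: "b \<in> {0..1}" "int01 (\<lambda>x. d (m x t)) \<le> d (m b t)"
    using exists_ge_int01[OF continuous_on_d_m[OF t]] by blast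
  then have "- K \<le> d (m b t)" unfolding K_def by linarith
  then have lower: "- (K / d0) \<le> m b t" by (rule d_bounds(2))
  have osc: "\<bar>m x t - m y t\<bar> \<le> int01 (\<lambda>x. \<bar>mx x t\<bar>)" if "y \<in> {0..1}" for y
    using t x that
    by (intro abs_diff_le_int01_abs_deriv continuous_on_slices(4)) (auto intro: derivatives(2))
  have "K / d0 \<le> (int01 (\<lambda>x. \<bar>g x\<bar>) + int01 (\<lambda>x. \<bar>mt x t\<bar>) + \<bar>h0\<bar> + \<bar>h1\<bar>) / d0"
    using K d0_pos by (simp add: divide_right_mono)
  then show ?thesis
    using upper lower osc[OF a(1)] osc[OF b(1)] unfolding abs_le_iff by linarith
qed

lemma energy_le_energy_bound:
  assumes t: "t \<in> {0..T}"
  shows "(L2norm (\<lambda>x. pt x t))\<^sup>2 + (L2norm (\<lambda>x. mt x t))\<^sup>2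
    \<le> energy_bound d1 d2 q (L2norm f) (L2norm g) (H1norm (\<lambda>x. p x 0)) (H1norm (\<lambda>x. m x 0))"
  using energy_decreasing[OF t] initial_energy_le by linarith

lemma abs_m_le_energy:
  assumes t: "t \<in> {0..T}" and x: "x \<in> {0..1}"
    and E: "(L2norm (\<lambda>x. pt x t))\<^sup>2 + (L2norm (\<lambda>x. mt x t))\<^sup>2 \<le> E"
  shows "\<bar>m x t\<bar> \<le> ((1 + (L2norm g)\<^sup>2) / 2 + (1 + E) / 2 + (\<bar>h0\<bar> + \<bar>h1\<bar>)) / d0
    + (1 + 2 * (L2norm f)\<^sup>2 + 2 * E) / 2"
proof -
  have "int01 (\<lambda>x. \<bar>g x\<bar>) \<le> (1 + (L2norm g)\<^sup>2) / 2"
    using g_L2 unfolding in_L2_def by (intro int01_abs_le_L2norm) simp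
  moreover have "int01 (\<lambda>x. \<bar>mt x t\<bar>) \<le> (1 + E) / 2"
    using int01_abs_le_L2norm[OF continuous_on_set_integrable_01[OF continuous_on_power[OF continuous_on_slices(5)[OF t]]]]
      E zero_le_power2[of "L2norm (\<lambda>x. pt x t)"]
    unfolding add_divide_distrib by linarith
  ultimately have "int01 (\<lambda>x. \<bar>g x\<bar>) + int01 (\<lambda>x. \<bar>mt x t\<bar>) + \<bar>h0\<bar> + \<bar>h1\<bar>
      \<le> (1 + (L2norm g)\<^sup>2) / 2 + (1 + E) / 2 + (\<bar>h0\<bar> + \<bar>h1\<bar>)"
    unfolding add_divide_distrib by linarith
  then have "(int01 (\<lambda>x. \<bar>g x\<bar>) + int01 (\<lambda>x. \<bar>mt x t\<bar>) + \<bar>h0\<bar> + \<bar>h1\<bar>) / d0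
      \<le> ((1 + (L2norm g)\<^sup>2) / 2 + (1 + E) / 2 + (\<bar>h0\<bar> + \<bar>h1\<bar>)) / d0"
    using d0_pos by (simp add: divide_right_mono)
  moreover have "int01 (\<lambda>x. \<bar>mx x t\<bar>) \<le> (1 + 2 * (L2norm f)\<^sup>2 + 2 * E) / 2"
    using int01_abs_le_L2norm[OF continuous_on_set_integrable_01[OF continuous_on_power[OF continuous_on_slices(4)[OF t]]]]
      mx_L2_sq_le[OF t] E zero_le_power2[of "L2norm (\<lambda>x. mt x t)"]
    unfolding add_divide_distrib by linarith
  ultimately show ?thesis
    using abs_m_le[OF t x] unfolding add_divide_distrib by linarith
qed

lemma norms_bounded:
  assumes t: "t \<in> {0..T}"
  shows "L2norm (\<lambda>x. deriv (\<lambda>s. p x s) t) + L2norm (\<lambda>x. deriv (\<lambda>s. m x s) t) + H1norm (\<lambda>x. m x t)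
    \<le> solution_bound d0 d1 d2 q (L2norm f) (L2norm g) (\<bar>h0\<bar> + \<bar>h1\<bar>)
         (H1norm (\<lambda>x. p x 0)) (H1norm (\<lambda>x. m x 0))"
proof -
  define F G where "F = L2norm f" and "G = L2norm g"
  define E where "E = energy_bound d1 d2 q F G (H1norm (\<lambda>x. p x 0)) (H1norm (\<lambda>x. m x 0))"
  define S where "S = ((1 + G\<^sup>2) / 2 + (1 + E) / 2 + (\<bar>h0\<bar> + \<bar>h1\<bar>)) / d0 + (1 + 2 * F\<^sup>2 + 2 * E) / 2"
  have energy: "(L2norm (\<lambda>x. pt x t))\<^sup>2 + (L2norm (\<lambda>x. mt x t))\<^sup>2 \<le> E"
    unfolding E_def F_def G_def by (rule energy_le_energy_bound[OF t])
  have pt: "L2norm (\<lambda>x. pt x t) \<le> sqrt E"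
    using energy zero_le_power2[of "L2norm (\<lambda>x. mt x t)"] by (intro real_le_rsqrt) linarith
  have mt: "L2norm (\<lambda>x. mt x t) \<le> sqrt E"
    using energy zero_le_power2[of "L2norm (\<lambda>x. pt x t)"] by (intro real_le_rsqrt) linarith
  have "(L2norm (\<lambda>x. m x t))\<^sup>2 \<le> S\<^sup>2"
    unfolding S_def F_def G_def
    by (rule L2norm_sq_le_of_abs_le, rule abs_m_le_energy[OF t _ energy]) simp
  moreover have "(L2norm (\<lambda>x. mx x t))\<^sup>2 \<le> 2 * F\<^sup>2 + 2 * E"
    using mx_L2_sq_le[OF t] energy zero_le_power2[of "L2norm (\<lambda>x. mt x t)"] unfolding F_def by linarith
  ultimately have m: "H1norm (\<lambda>x. m x t) \<le> sqrt (S\<^sup>2 + 2 * F\<^sup>2 + 2 * E)"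
    unfolding H1norm_slice_eq(2)[OF t] by (intro real_sqrt_le_mono) linarith
  have "L2norm (\<lambda>x. deriv (\<lambda>s. p x s) t) = L2norm (\<lambda>x. pt x t)"
    "L2norm (\<lambda>x. deriv (\<lambda>s. m x s) t) = L2norm (\<lambda>x. mt x t)"
    using t by (auto intro!: L2norm_cong DERIV_imp_deriv derivatives(5,6))
  then show ?thesis
    using pt mt m
    unfolding solution_bound_def Let_def E_def[symmetric] F_def[symmetric] G_def[symmetric] S_def[symmetric]
    by linarith
qed

end

lemma smooth_on2_obtain_partials:
  assumes "open U" "S \<subseteq> U" "smooth_on2 U u"
  obtains ux ut uxt utt where "has_second_partials S u ux ut uxt utt"
    "\<And>x t. (x, t) \<in> S \<Longrightarrow> deriv (\<lambda>y. u y t) x = ux x t \<and> deriv (\<lambda>s. u x s) t = ut x t"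
proof -
  obtain ux ut uxt utt where "has_second_partials U u ux ut uxt utt"
    using smooth_on2_has_second_partials[OF assms(1,3)] .
  then have u: "has_second_partials S u ux ut uxt utt"
    using assms(2) by (rule has_second_partials_subset)
  then have "has_partials S u ux ut" unfolding has_second_partials_def by blast
  with u show thesis using has_partials_deriv by (intro that) blast+
qed

lemma smooth_solution_norms_bounded:
  fixes d :: "real \<Rightarrow> real" and d0 d1 d2 q :: real
  assumes "d C1_differentiable_on UNIV" "d 0 = 0" "0 < d0" "0 \<le> d1" "0 \<le> d2" "0 \<le> q"
    "\<forall>y. d0 < deriv d y" "\<forall>y. y \<noteq> 0 \<longrightarrow> \<bar>deriv d y\<bar> \<le> d1 + d2 * \<bar>y\<bar> powr q"
    and "in_L2 f" "in_L2 g" "0 < T"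
    and U: "open U" "{0..1} \<times> {0..T} \<subseteq> U" "smooth_on2 U p" "smooth_on2 U m"
    and eq_p: "\<forall>t\<in>{0..T}. AE x in lborel. x \<in> {0<..<1} \<longrightarrow>
      deriv (\<lambda>s. p x s) t + deriv (\<lambda>y. m y t) x = f x"
    and eq_m: "\<forall>t\<in>{0..T}. AE x in lborel. x \<in> {0<..<1} \<longrightarrow>
      deriv (\<lambda>s. m x s) t + deriv (\<lambda>y. p y t) x + d (m x t) = g x"
    and "\<forall>t\<in>{0..T}. p 0 t = h0 \<and> p 1 t = h1"
    and t: "t \<in> {0..T}"
  shows "L2norm (\<lambda>x. deriv (\<lambda>s. p x s) t) + L2norm (\<lambda>x. deriv (\<lambda>s. m x s) t) + H1norm (\<lambda>x. m x t)
    \<le> solution_bound d0 d1 d2 q (L2norm f) (L2norm g) (\<bar>h0\<bar> + \<bar>h1\<bar>)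
         (H1norm (\<lambda>x. p x 0)) (H1norm (\<lambda>x. m x 0))"
proof -
  obtain px pt pxt ptt where p: "has_second_partials ({0..1} \<times> {0..T}) p px pt pxt ptt"
    and dp: "\<And>x t. (x, t) \<in> {0..1} \<times> {0..T} \<Longrightarrow> deriv (\<lambda>y. p y t) x = px x t \<and> deriv (\<lambda>s. p x s) t = pt x t"
    using smooth_on2_obtain_partials[OF U(1,2,3)] by blast
  obtain mx mt mxt mtt where m: "has_second_partials ({0..1} \<times> {0..T}) m mx mt mxt mtt"
    and dm: "\<And>x t. (x, t) \<in> {0..1} \<times> {0..T} \<Longrightarrow> deriv (\<lambda>y. m y t) x = mx x t \<and> deriv (\<lambda>s. m x s) t = mt x t"
    using smooth_on2_obtain_partials[OF U(1,2,4)] by blast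
  interpret damped_wave_solution d d0 d1 d2 q f g h0 h1 T p px pt pxt ptt m mx mt mxt mtt
  proof (unfold_locales)
    fix t :: real assume t: "t \<in> {0..T}"
    show "AE x in lborel. x \<in> {0<..<1} \<longrightarrow> pt x t + mx x t = f x"
      using eq_p t by (auto elim!: AE_mp intro!: AE_I2 simp: dp dm)
    show "AE x in lborel. x \<in> {0<..<1} \<longrightarrow> mt x t + px x t + d (m x t) = g x"
      using eq_m t by (auto elim!: AE_mp intro!: AE_I2 simp: dp dm)
  qed (use assms p m in auto)
  show ?thesis by (rule norms_bounded[OF t])
qed

theorem lemma2:
  fixes d :: "real \<Rightarrow> real" and d0 d1 d2 q :: real
  assumes "d C1_differentiable_on UNIV"
    and "d 0 = 0"
    and "d0 > 0" and "d1 \<ge> 0" and "d2 \<ge> 0" and "q \<ge> 0"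
    and "\<forall>y. deriv d y > d0"
    and "\<forall>y. y \<noteq> 0 \<longrightarrow> \<bar>deriv d y\<bar> \<le> d1 + d2 * \<bar>y\<bar> powr q"
  shows "\<exists>C :: real \<Rightarrow> real \<Rightarrow> real \<Rightarrow> real \<Rightarrow> real \<Rightarrow> real.
    \<forall>(f :: real \<Rightarrow> real) (g :: real \<Rightarrow> real) (h0 :: real) (h1 :: real) (T :: real)
      (p :: real \<Rightarrow> real \<Rightarrow> real) (m :: real \<Rightarrow> real \<Rightarrow> real).
      in_L2 f \<and> in_L2 g \<and> T > 0
      \<and> (\<exists>U. open U \<and> {0..1} \<times> {0..T} \<subseteq> U \<and> smooth_on2 U p \<and> smooth_on2 U m)
      \<and> (\<forall>t\<in>{0..T}. AE x in lborel. x \<in> {0<..<1} \<longrightarrow>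
            deriv (\<lambda>s. p x s) t + deriv (\<lambda>y. m y t) x = f x)
      \<and> (\<forall>t\<in>{0..T}. AE x in lborel. x \<in> {0<..<1} \<longrightarrow>
            deriv (\<lambda>s. m x s) t + deriv (\<lambda>y. p y t) x + d (m x t) = g x)
      \<and> (\<forall>t\<in>{0..T}. p 0 t = h0 \<and> p 1 t = h1)
      \<longrightarrow> (\<forall>t\<in>{0..T}.
            L2norm (\<lambda>x. deriv (\<lambda>s. p x s) t) + L2norm (\<lambda>x. deriv (\<lambda>s. m x s) t)
              + H1norm (\<lambda>x. m x t)
            \<le> C (L2norm f) (L2norm g) (\<bar>h0\<bar> + \<bar>h1\<bar>) (H1norm (\<lambda>x. p x 0)) (H1norm (\<lambda>x. m x 0)))"
  by (intro exI[of _ "solution_bound d0 d1 d2 q"] allI impI ballI, elim conjE exE)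
    (rule smooth_solution_norms_bounded[OF assms]; assumption)

end
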